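(* Consider a 3-S 3-D MUN-D with time-varying LECs (as in the context), $n>d_{max}$, and let $i,j\in\{1,2,3\}$ be such that the min-cut between $S_i$ and $T_j$ is at least $1$. Then the determinant of the $n\times n$ matrix $M_{ij}$ is a nonzero polynomial in $\underline{\varepsilon}'=(\underline{\varepsilon}^{(-d_{max})},\underline{\varepsilon}^{(-d_{max}+1)},\dots,\underline{\varepsilon}^{(n-1)})$.
   Context: A 3-S 3-D MUN-D is a finite directed acyclic graph whose links carry one field symbol per time unit with unit delay, with sources $S_1,S_2,S_3$ (one process each) and destinations $T_1,T_2,T_3$ (one output each), $T_i$ demanding $S_i$'s process, min-cut between $S_i$ and $T_i$ equal to $1$. Linear network coding is used with time-varying LECs: $\underline{\varepsilon}^{(t)}$ denotes the vector of LECs in use at time $t$ (a link symbol at time $t+1$ is a combination, with coefficients from $\underline{\varepsilon}^{(t)}$, of the tail source symbol and incoming link symbols at time $t$; the destination output at time $t$ uses coefficients from $\underline{\varepsilon}^{(t)}$). The outputs satisfy $Y_j^{(t)}=\sum_{i=1}^3\sum_{d=0}^{d_{max}}M_{ij}^{(d)}(\underline{\varepsilon}^{(t-d,t)})X_i^{(t-d)}$, where $M_{ij}^{(d)}(\underline{\varepsilon}^{(t-d,t)})$ (the response at $T_j$ at time $t$ to a unit symbol sent by $S_i$ at time $t-d$) is a polynomial in the LECs used at times $t-d,\dots,t$, and $d_{max}$ bounds the relevant path delays (after removing a common delay). Each source sends $n$ generations $X_i^{(0)},\dots,X_i^{(n-1)}$ preceded by the cyclic prefix $X_i^{(-d)}=X_i^{(n-d)}$,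 $1\le d\le d_{max}$, starting at time $-d_{max}$. $M_{ij}$ is the $n\times n$ matrix with rows and columns indexed $0,\dots,n-1$ whose entry in row $r$ and column $(r+d)\bmod n$ is $M_{ij}^{(d)}(\underline{\varepsilon}^{(n-1-r-d,\,n-1-r)})$ for $0\le d\le d_{max}$, all other entries being $0$; thus $[Y_j^{(n-1)}\cdots Y_j^{(0)}]^T=\sum_i M_{ij}[X_i^{(n-1)}\cdots X_i^{(0)}]^T$. *)

theory Defs
  imports "HOL-Library.Poly_Mapping" "Jordan_Normal_Form.Determinant"
begin

definition is_path :: "'e set \<Rightarrow> ('e \<Rightarrow> 'v) \<Rightarrow> ('e \<Rightarrow> 'v) \<Rightarrow> 'v \<Rightarrow> 'v \<Rightarrow> 'e list \<Rightarrow> bool" where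
  "is_path Es tail head u v p \<longleftrightarrow>
     p \<noteq> [] \<and> set p \<subseteq> Es \<and> tail (hd p) = u \<and> head (last p) = v \<and>
     (\<forall>k. Suc k < length p \<longrightarrow> head (p ! k) = tail (p ! Suc k))"

definition acyclic_net :: "'e set \<Rightarrow> ('e \<Rightarrow> 'v) \<Rightarrow> ('e \<Rightarrow> 'v) \<Rightarrow> bool" where
  "acyclic_net Es tail head \<longleftrightarrow> (\<forall>v p. \<not> is_path Es tail head v v p)"

definition connected_net :: "'e set \<Rightarrow> ('e \<Rightarrow> 'v) \<Rightarrow> ('e \<Rightarrow> 'v) \<Rightarrow> 'v \<Rightarrow> 'v \<Rightarrow> bool" where
  "connected_net Es tail head u v \<longleftrightarrow> (\<exists>p. is_path Es tail head u v p)"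

definition mincut :: "'e set \<Rightarrow> ('e \<Rightarrow> 'v) \<Rightarrow> ('e \<Rightarrow> 'v) \<Rightarrow> 'v \<Rightarrow> 'v \<Rightarrow> nat" where
  "mincut Es tail head u v =
     (LEAST k. \<exists>C. C \<subseteq> Es \<and> card C = k \<and> \<not> connected_net (Es - C) tail head u v)"

text \<open>Names of local encoding coefficients (LECs):
  Src i e : coefficient of the source symbol of S_i on link e (tail e = s i);
  Lnk e' e : coefficient of incoming link e' on outgoing link e (head e' = tail e);
  Out e' j : coefficient of incoming link e' in the output of T_j (head e' = t j).
  A variable of the polynomial ring is a pair (time, LEC name).\<close>
datatype 'e lec = Src nat 'e | Lnk 'e 'e | Out 'e nat

type_synonym ('e, 'a) lecpoly = "((int \<times> 'e lec) \<Rightarrow>\<^sub>0 nat) \<Rightarrow>\<^sub>0 'a"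

definition pvar :: "int \<times> 'e lec \<Rightarrow> ('e, 'a::comm_ring_1) lecpoly" where
  "pvar x = Poly_Mapping.single (Poly_Mapping.single x 1) 1"

text \<open>Symbol on link e, k time units after S_i sent a unit symbol at time \<tau>0
  (all other source symbols zero), as a polynomial in the time-indexed LECs.\<close>
fun link_sym :: "'e set \<Rightarrow> ('e \<Rightarrow> 'v) \<Rightarrow> ('e \<Rightarrow> 'v) \<Rightarrow> (nat \<Rightarrow> 'v) \<Rightarrow> nat \<Rightarrow> int \<Rightarrow> nat
                 \<Rightarrow> 'e \<Rightarrow> ('e, 'a::comm_ring_1) lecpoly" where
  "link_sym Es tail head s i \<tau>0 0 e = 0"
| "link_sym Es tail head s i \<tau>0 (Suc k) e =
     (if k = 0 \<and> tail e = s i then pvar (\<tau>0, Src i e) else 0)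
     + (\<Sum>e'\<in>{e'\<in>Es. head e' = tail e}. pvar (\<tau>0 + int k, Lnk e' e) * link_sym Es tail head s i \<tau>0 k e')"

text \<open>Response at T_j at time \<tau>0 + k to a unit symbol sent by S_i at time \<tau>0.\<close>
definition response :: "'e set \<Rightarrow> ('e \<Rightarrow> 'v) \<Rightarrow> ('e \<Rightarrow> 'v) \<Rightarrow> (nat \<Rightarrow> 'v) \<Rightarrow> (nat \<Rightarrow> 'v)
                      \<Rightarrow> nat \<Rightarrow> nat \<Rightarrow> int \<Rightarrow> nat \<Rightarrow> ('e, 'a::comm_ring_1) lecpoly" where
  "response Es tail head s t i j \<tau>0 k =
     (\<Sum>e'\<in>{e'\<in>Es. head e' = t j}. pvar (\<tau>0 + int k, Out e' j) * link_sym Es tail head s i \<tau>0 k e')"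

text \<open>M_ij^(d) at (shifted) output time t: response to the symbol sent at time t - d,
  observed at real time t + \<delta>, where \<delta> is the common delay removed.\<close>
definition Md :: "'e set \<Rightarrow> ('e \<Rightarrow> 'v) \<Rightarrow> ('e \<Rightarrow> 'v) \<Rightarrow> (nat \<Rightarrow> 'v) \<Rightarrow> (nat \<Rightarrow> 'v)
                 \<Rightarrow> nat \<Rightarrow> nat \<Rightarrow> nat \<Rightarrow> nat \<Rightarrow> int \<Rightarrow> ('e, 'a::comm_ring_1) lecpoly" where
  "Md Es tail head s t \<delta> i j d tt = response Es tail head s t i j (tt - int d) (d + \<delta>)"

text \<open>The n x n matrix M_ij: entry (r, (r+d) mod n) is M_ij^(d) at time n-1-r, 0 \<le> d \<le> dmax.
  (For n > dmax the positions (r+d) mod n, d \<le> dmax, are pairwise distinct.)\<close>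
definition Mmat :: "'e set \<Rightarrow> ('e \<Rightarrow> 'v) \<Rightarrow> ('e \<Rightarrow> 'v) \<Rightarrow> (nat \<Rightarrow> 'v) \<Rightarrow> (nat \<Rightarrow> 'v)
                   \<Rightarrow> nat \<Rightarrow> nat \<Rightarrow> nat \<Rightarrow> nat \<Rightarrow> nat \<Rightarrow> ('e, 'a::comm_ring_1) lecpoly mat" where
  "Mmat Es tail head s t \<delta> dmax n i j =
     mat n n (\<lambda>(r, c). \<Sum>d\<in>{d. d \<le> dmax \<and> (r + d) mod n = c}.
                          Md Es tail head s t \<delta> i j d (int n - 1 - int r))"

end

theory Submission
  imports Defs
begin

text \<open>Since the min-cut from \<open>S\<^sub>i\<close> to \<open>T\<^sub>j\<close> is positive, there is a path \<open>p\<close> from \<open>S\<^sub>i\<close> to \<open>T\<^sub>j\<close>,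
  and by acyclicity it visits no link twice. Specialise every LEC met along \<open>p\<close> to \<open>1\<close>, at every time,
  and all other LECs to \<open>0\<close>. Then a unit symbol of \<open>S\<^sub>i\<close> reaches \<open>T\<^sub>j\<close> after exactly \<open>length p\<close> steps,
  so the delay-\<open>d\<close> response specialises to \<open>1\<close> for \<open>d = length p - \<delta>\<close> and to \<open>0\<close> otherwise,
  and \<open>M\<^sub>i\<^sub>j\<close> specialises to the permutation matrix of a cyclic shift. Its determinant is \<open>\<plusminus>1\<close>, and since
  specialisation is a ring homomorphism commuting with \<open>det\<close>, \<open>det M\<^sub>i\<^sub>j \<noteq> 0\<close>.\<close>

lemma poly_mapping_single_induct [case_names zero single add]:
  assumes "P 0" and "\<And>k v. P (Poly_Mapping.single k v)" and "\<And>f g. P f \<Longrightarrow> P g \<Longrightarrow> P (f + g)"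
  shows "P f"
proof (induction f rule: Poly_Mapping.update_induct)
  case (update f a b)
  then have "Poly_Mapping.update a b f = Poly_Mapping.single a b + f"
    by (intro poly_mapping_eqI) (auto simp: lookup_update lookup_add lookup_single in_keys_iff when_def)
  with update assms(2,3) show ?case by simp
qed (rule assms(1))

lemma keys_add_nat: "Poly_Mapping.keys (a + b :: 'x \<Rightarrow>\<^sub>0 nat) = Poly_Mapping.keys a \<union> Poly_Mapping.keys b"
  by (auto simp: in_keys_iff lookup_add)

text \<open>Evaluation of a polynomial at the \<open>0/1\<close>-point that is \<open>1\<close> exactly on the variables in \<open>V\<close>:
  a monomial survives, with value \<open>1\<close>, iff all its variables lie in \<open>V\<close>.\<close>

definition eval_indicator :: "'x set \<Rightarrow> (('x \<Rightarrow>\<^sub>0 nat) \<Rightarrow>\<^sub>0 'a::comm_ring_1) \<Rightarrow> 'a" where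
  "eval_indicator V p = (\<Sum>m. Poly_Mapping.lookup p m when Poly_Mapping.keys m \<subseteq> V)"

lemma eval_indicator_single:
  "eval_indicator V (Poly_Mapping.single m c) = (c when Poly_Mapping.keys m \<subseteq> V)"
proof -
  have "(\<lambda>m'. Poly_Mapping.lookup (Poly_Mapping.single m c) m' when Poly_Mapping.keys m' \<subseteq> V)
        = (\<lambda>m'. (\<lambda>_. c when Poly_Mapping.keys m \<subseteq> V) m' when m' = m)"
    by (auto simp: fun_eq_iff lookup_single when_def)
  then show ?thesis
    unfolding eval_indicator_def by (simp only: Sum_any_when_equal)
qed

lemma eval_indicator_add: "eval_indicator V (p + q) = eval_indicator V p + eval_indicator V q"
proof -
  have fin: "finite {m. (Poly_Mapping.lookup r m when P m) \<noteq> 0}" for r :: "('x \<Rightarrow>\<^sub>0 nat) \<Rightarrow>\<^sub>0 'a" and P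
    by (rule finite_subset[OF _ finite_keys[of r]]) (auto simp: in_keys_iff)
  show ?thesis
    unfolding eval_indicator_def lookup_add when_add_distrib by (rule Sum_any.distrib[OF fin fin])
qed

lemma eval_indicator_zero: "eval_indicator V 0 = 0"
  by (simp add: eval_indicator_def)

lemma eval_indicator_mult: "eval_indicator V (p * q) = eval_indicator V p * eval_indicator V q"
proof (induction p rule: poly_mapping_single_induct)
  case (single m a)
  show ?case
  proof (induction q rule: poly_mapping_single_induct)
    case (single m' b)
    show ?case
      by (simp add: mult_single eval_indicator_single keys_add_nat when_def)
  qed (simp_all add: eval_indicator_zero eval_indicator_add distrib_left)
qed (simp_all add: eval_indicator_zero eval_indicator_add distrib_right)

interpretation eval_indicator: comm_ring_hom "eval_indicator V"
proof
  show "eval_indicator V 1 = 1"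
    using eval_indicator_single[of V 0 1] by (simp add: single_one)
qed (simp_all add: eval_indicator_zero eval_indicator_add eval_indicator_mult)

lemma eval_indicator_pvar:
  "eval_indicator V (pvar x :: ('e, 'a::comm_ring_1) lecpoly) = of_bool (x \<in> V)"
  by (simp add: pvar_def eval_indicator_single when_def)

lemma sum_mult_of_bool_eq:
  assumes "finite A"
  shows "(\<Sum>x\<in>A. f x * of_bool (x = c \<and> P)) = (if c \<in> A \<and> P then f c else (0::'a::semiring_1))"
  using assms by (cases P) (simp_all add: sum.delta')

lemma connected_net_if_mincut_pos:
  assumes "0 < mincut Es tail head u v"
  shows "connected_net Es tail head u v"
proof (rule ccontr)
  assume "\<not> connected_net Es tail head u v"
  then have "mincut Es tail head u v = 0"
    unfolding mincut_def by (intro Least_eq_0) (rule exI[of _ "{}"], simp)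
  with assms show False by simp
qed

lemma is_path_segment:
  assumes P: "is_path Es tail head u v p" and ab: "a < b" "b \<le> length p"
  shows "is_path Es tail head (tail (p ! a)) (head (p ! (b - 1))) (take (b - a) (drop a p))"
proof -
  let ?q = "take (b - a) (drop a p)"
  have len: "length ?q = b - a" and nth: "\<And>k. k < b - a \<Longrightarrow> ?q ! k = p ! (a + k)"
    using ab by auto
  then have "hd ?q = p ! a" "last ?q = p ! (b - 1)"
    using ab by (auto simp: hd_conv_nth last_conv_nth)
  moreover have "set ?q \<subseteq> set p"
    by (meson order_trans set_drop_subset set_take_subset)
  ultimately show ?thesis
    using P len nth ab unfolding is_path_def by auto
qed

lemma distinct_if_is_path:
  assumes acyc: "acyclic_net Es tail head" and P: "is_path Es tail head u v p"
  shows "distinct p"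
proof (rule ccontr)
  assume "\<not> distinct p"
  then obtain a b where ab: "a < b" "b < length p" "p ! a = p ! b"
    by (metis distinct_conv_nth linorder_neqE_nat)
  have "head (p ! (b - 1)) = tail (p ! b)"
    using P ab unfolding is_path_def by (metis Suc_pred' gr_zeroI less_nat_zero_code)
  with ab is_path_segment[OF P, of a b]
  have "is_path Es tail head (tail (p ! a)) (tail (p ! a)) (take (b - a) (drop a p))"
    by simp
  with acyc show False unfolding acyclic_net_def by blast
qed

definition path_lecs :: "nat \<Rightarrow> nat \<Rightarrow> 'e list \<Rightarrow> (int \<times> 'e lec) set" where
  "path_lecs i j p = {x. snd x = Src i (hd p) \<or> snd x = Out (last p) j \<or>
                        (\<exists>m. Suc m < length p \<and> snd x = Lnk (p ! m) (p ! Suc m))}"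

lemma Lnk_in_path_lecs_iff:
  assumes "distinct p" and "m < length p"
  shows "(\<tau>, Lnk (p ! m) e) \<in> path_lecs i j p \<longleftrightarrow> Suc m < length p \<and> e = p ! Suc m"
  using assms by (auto simp: path_lecs_def nth_eq_iff_index_eq)

lemma Out_in_path_lecs_iff:
  assumes "distinct p" and "m < length p"
  shows "(\<tau>, Out (p ! m) j) \<in> path_lecs i j p \<longleftrightarrow> Suc m = length p"
proof -
  have "last p = p ! (length p - 1)"
    using assms(2) by (intro last_conv_nth) auto
  with assms show ?thesis
    by (auto simp: path_lecs_def nth_eq_iff_index_eq)
qed

lemma eval_link_sym_along_path:
  assumes fin: "finite Es" and P: "is_path Es tail head (s i) v p" and D: "distinct p"
  shows "eval_indicator (path_lecs i j p) (link_sym Es tail head s i \<tau>0 k e :: ('e, 'a::comm_ring_1) lecpoly)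
         = of_bool (e = p ! (k - 1) \<and> 0 < k \<and> k \<le> length p)"
proof (induction k arbitrary: e)
  case (Suc k)
  let ?V = "path_lecs i j p" and ?A = "{e'\<in>Es. head e' = tail e}"
  let ?incoming = "(\<Sum>e'\<in>?A. pvar (\<tau>0 + int k, Lnk e' e) * link_sym Es tail head s i \<tau>0 k e' :: ('e, 'a) lecpoly)"
  have pne: "p \<noteq> []" and pEs: "set p \<subseteq> Es" and ptail: "tail (p ! 0) = s i"
    and pcons: "\<And>k. Suc k < length p \<Longrightarrow> head (p ! k) = tail (p ! Suc k)"
    using P unfolding is_path_def by (auto simp: hd_conv_nth)
  have source: "eval_indicator ?V (if k = 0 \<and> tail e = s i then pvar (\<tau>0, Src i e) else 0 :: ('e, 'a) lecpoly)
      = of_bool (k = 0 \<and> e = p ! 0)"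
    using ptail pne by (auto simp: eval_indicator_pvar path_lecs_def hd_conv_nth eval_indicator.hom_zero)
  have "eval_indicator ?V ?incoming
      = (\<Sum>e'\<in>?A. of_bool ((\<tau>0 + int k, Lnk e' e) \<in> ?V) * of_bool (e' = p ! (k - 1) \<and> 0 < k \<and> k \<le> length p))"
    by (simp add: eval_indicator.hom_sum eval_indicator.hom_mult eval_indicator_pvar Suc.IH)
  also have "\<dots> = of_bool (p ! (k - 1) \<in> ?A \<and> 0 < k \<and> k \<le> length p \<and>
                              (\<tau>0 + int k, Lnk (p ! (k - 1)) e) \<in> ?V)"
    by (subst sum_mult_of_bool_eq) (auto simp: fin)
  also have "\<dots> = of_bool (0 < k \<and> k < length p \<and> e = p ! k)"
  proof (cases k)
    case (Suc m)
    then show ?thesis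
      using pEs pcons[of m] Lnk_in_path_lecs_iff[OF D, of m] by auto
  qed simp
  finally have incoming: "eval_indicator ?V ?incoming
      = of_bool (0 < k \<and> k < length p \<and> e = p ! k)" .
  have "eval_indicator ?V (link_sym Es tail head s i \<tau>0 (Suc k) e :: ('e, 'a) lecpoly)
      = of_bool (k = 0 \<and> e = p ! 0) + of_bool (0 < k \<and> k < length p \<and> e = p ! k)"
    by (simp only: link_sym.simps(2) eval_indicator.hom_add source incoming)
  then show ?case
    using pne by (cases k) (auto simp: Suc_le_eq)
qed simp

lemma eval_response_along_path:
  assumes fin: "finite Es" and P: "is_path Es tail head (s i) (t j) p" and D: "distinct p"
  shows "eval_indicator (path_lecs i j p) (response Es tail head s t i j \<tau>0 k :: ('e, 'a::comm_ring_1) lecpoly)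
         = of_bool (k = length p)"
proof -
  have pne: "p \<noteq> []" and pEs: "set p \<subseteq> Es" and phead: "head (p ! (length p - 1)) = t j"
    using P unfolding is_path_def by (auto simp: last_conv_nth)
  have "eval_indicator (path_lecs i j p) (response Es tail head s t i j \<tau>0 k :: ('e, 'a) lecpoly)
      = (\<Sum>e'\<in>{e'\<in>Es. head e' = t j}. of_bool ((\<tau>0 + int k, Out e' j) \<in> path_lecs i j p)
                                       * of_bool (e' = p ! (k - 1) \<and> 0 < k \<and> k \<le> length p))"
    by (simp add: response_def eval_indicator.hom_sum eval_indicator.hom_mult eval_indicator_pvar
        eval_link_sym_along_path[where s = s and i = i, OF fin P D])
  also have "\<dots> = of_bool (k = length p)"
    using fin pne pEs phead Out_in_path_lecs_iff[OF D, of "k - 1"]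
    by (subst sum_mult_of_bool_eq) auto
  finally show ?thesis .
qed

lemma eval_Mmat_along_path:
  assumes fin: "finite Es" and P: "is_path Es tail head (s i) (t j) p" and D: "distinct p"
    and len: "\<delta> \<le> length p" "length p \<le> \<delta> + dmax"
  shows "map_mat (eval_indicator (path_lecs i j p)) (Mmat Es tail head s t \<delta> dmax n i j :: ('e, 'a::comm_ring_1) lecpoly mat)
         = mat n n (\<lambda>(r, c). of_bool (c = (r + (length p - \<delta>)) mod n))"
proof (rule eq_matI)
  fix r c assume "r < dim_row (mat n n (\<lambda>(r, c). of_bool (c = (r + (length p - \<delta>)) mod n)) :: 'a mat)"
    and "c < dim_col (mat n n (\<lambda>(r, c). of_bool (c = (r + (length p - \<delta>)) mod n)) :: 'a mat)"
  then have rc: "r < n" "c < n" by auto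
  let ?D = "{d. d \<le> dmax \<and> (r + d) mod n = c}"
  let ?ev = "eval_indicator (path_lecs i j p) :: ('e, 'a) lecpoly \<Rightarrow> 'a"
  have "finite ?D" by (rule finite_subset[of _ "{..dmax}"]) auto
  have "map_mat ?ev (Mmat Es tail head s t \<delta> dmax n i j) $$ (r, c)
      = (\<Sum>d\<in>?D. ?ev (Md Es tail head s t \<delta> i j d (int n - 1 - int r)))"
    using rc by (simp add: Mmat_def eval_indicator.hom_sum)
  also have "\<dots> = (\<Sum>d\<in>?D. of_bool (length p - \<delta> = d))"
    using len by (intro sum.cong)
      (auto simp: Md_def eval_response_along_path[where s = s and i = i and t = t and j = j, OF fin P D])
  also have "\<dots> = of_bool (c = (r + (length p - \<delta>)) mod n)"
    using \<open>finite ?D\<close> len by (simp add: of_bool_def sum.delta)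
  also have "\<dots> = mat n n (\<lambda>(r, c). of_bool (c = (r + (length p - \<delta>)) mod n)) $$ (r, c)"
    using rc by simp
  finally show "map_mat ?ev (Mmat Es tail head s t \<delta> dmax n i j) $$ (r, c)
      = mat n n (\<lambda>(r, c). of_bool (c = (r + (length p - \<delta>)) mod n)) $$ (r, c)" .
qed (simp_all add: Mmat_def)

lemma det_permutation_mat:
  assumes "\<pi> permutes {0..<n}"
  shows "det (mat n n (\<lambda>(r, c). of_bool (c = \<pi> r)) :: 'a::comm_ring_1 mat) = signof \<pi>"
proof -
  have "mat n n (\<lambda>(r, c). of_bool (c = \<pi> r)) = mat n n (\<lambda>(r, c). (1\<^sub>m n :: 'a mat) $$ (\<pi> r, c))"
    using permutes_in_image[OF assms] by (intro eq_matI) auto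
  then show ?thesis
    using det_permute_rows[OF one_carrier_mat assms, where 'a = 'a] by simp
qed

lemma cyclic_shift_permutes:
  fixes n d :: nat
  assumes "0 < n"
  shows "(\<lambda>r. if r < n then (r + d) mod n else r) permutes {0..<n}"
proof (rule bij_imp_permutes)
  let ?f = "\<lambda>r. if r < n then (r + d) mod n else r"
  have inj: "inj_on ?f {0..<n}"
  proof (rule inj_onI)
    fix x y assume "x \<in> {0..<n}" "y \<in> {0..<n}" "?f x = ?f y"
    then have shifted: "(x + d) mod n = (y + d) mod n" and "x < n" "y < n" by auto
    from shifted have "x mod n = y mod n"
      by (simp add: nat_mod_eq_iff)
    with \<open>x < n\<close> \<open>y < n\<close> show "x = y" by simp
  qed
  moreover have "?f ` {0..<n} \<subseteq> {0..<n}" using assms by auto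
  ultimately have "?f ` {0..<n} = {0..<n}" by (intro endo_inj_surj) auto
  with inj show "bij_betw ?f {0..<n} {0..<n}"
    unfolding bij_betw_def by blast
qed auto

lemma det_cyclic_shift_mat_neq_0:
  assumes "0 < n"
  shows "det (mat n n (\<lambda>(r, c). of_bool (c = (r + d) mod n)) :: 'a::comm_ring_1 mat) \<noteq> 0"
proof -
  let ?\<pi> = "\<lambda>r. if r < n then (r + d) mod n else r"
  have "mat n n (\<lambda>(r, c). of_bool (c = (r + d) mod n)) = (mat n n (\<lambda>(r, c). of_bool (c = ?\<pi> r)) :: 'a mat)"
    by (intro eq_matI) auto
  then have "det (mat n n (\<lambda>(r, c). of_bool (c = (r + d) mod n)) :: 'a mat) = signof ?\<pi>"
    using det_permutation_mat[OF cyclic_shift_permutes[OF assms]] by simp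
  then show ?thesis
    by (simp add: sign_def)
qed

theorem lemma5:
  fixes Es :: "'e set" and tail head :: "'e \<Rightarrow> 'v" and s t :: "nat \<Rightarrow> 'v"
    and \<delta> dmax n i j :: nat
  assumes fin: "finite Es"
    and acyc: "acyclic_net Es tail head"
    and unit_cut: "\<forall>k\<in>{1,2,3}. mincut Es tail head (s k) (t k) = 1"
    and delays: "\<forall>a\<in>{1,2,3}. \<forall>b\<in>{1,2,3}. \<forall>p. is_path Es tail head (s a) (t b) p
                    \<longrightarrow> \<delta> \<le> length p \<and> length p \<le> \<delta> + dmax"
    and n: "n > dmax"
    and ij: "i \<in> {1,2,3}" "j \<in> {1,2,3}"
    and cut_ij: "mincut Es tail head (s i) (t j) \<ge> 1"
  shows "det (Mmat Es tail head s t \<delta> dmax n i j :: ('e, 'a::field) lecpoly mat) \<noteq> 0"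
proof
  assume "det (Mmat Es tail head s t \<delta> dmax n i j :: ('e, 'a) lecpoly mat) = 0"
  obtain p where P: "is_path Es tail head (s i) (t j) p"
    using connected_net_if_mincut_pos[of Es tail head "s i" "t j"] cut_ij
    unfolding connected_net_def by auto
  have D: "distinct p"
    using distinct_if_is_path[OF acyc P] .
  have len: "\<delta> \<le> length p" "length p \<le> \<delta> + dmax"
    using delays ij P by blast+
  let ?ev = "eval_indicator (path_lecs i j p) :: ('e, 'a) lecpoly \<Rightarrow> 'a"
  have "?ev (det (Mmat Es tail head s t \<delta> dmax n i j))
      = det (map_mat ?ev (Mmat Es tail head s t \<delta> dmax n i j))"
    by simp
  also have "\<dots> \<noteq> 0"
    unfolding eval_Mmat_along_path[where s = s and i = i and t = t and j = j, OF fin P D len]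
    using n by (intro det_cyclic_shift_mat_neq_0) simp
  finally show False
    using \<open>det (Mmat Es tail head s t \<delta> dmax n i j) = 0\<close> by simp
qed

end
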